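(* Let $G=(V,E)$ be a finite simple graph and let $\mathcal{X}=(X_i)_{i=1}^n$ be a sequence of subsets of $V$. Then $\mathcal{X}$ is a measurement schedule on the graph state $|G\rangle$ if and only if $\mathcal{X}$ is a path decomposition of $G$.
   Context: The graph state of $G$ is $|G\rangle=\left(\prod_{e\in E} CZ_e\right)|+\rangle^{\otimes V}$, with one qubit per vertex. A measurement schedule on $|G\rangle$ is a process of initialising and measuring the qubits (vertices), represented by the sequence $(X_i)_{i=1}^n$ where $X_i\subseteq V$ is the set of qubits that are active (initialised but not yet measured) at step $i$. It must satisfy: (M1) each qubit is initialised exactly once (so every $v\in V$ lies in some $X_i$, and the set of steps at which $v$ is active is a single contiguous block of indices, after which $v$ is measured and never active again); (M2) a qubit is measured only after all of its neighbouring qubits have been initialised (i.e. if $j$ is the last index with $v\in X_j$, then every neighbour $u$ of $v$ lies in some $X_i$ with $i\le j$). A path decomposition of $G$ is a sequence $(X_i)_{i=1}^n$ of subsets of $V$ such that: (P1) every $v\in V$ lies in some $X_i$; (P2) for every edge $e\in E$ there is an $i$ with $e\subseteq X_i$; (P3) for all $i\le j\le k$, if $v\in X_i\cap X_k$ then $v\in X_j$. *)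

theory Defs
  imports Main
begin

definition simple_graph :: "'a set \<Rightarrow> 'a set set \<Rightarrow> bool" where
  "simple_graph V E \<longleftrightarrow> finite V \<and> (\<forall>e\<in>E. e \<subseteq> V \<and> card e = 2)"

text \<open>Measurement schedule (X_i), i = 1..n, on the graph state of G = (V,E).
  (M1) every qubit is active at some step, and its active steps form a contiguous block;
  (M2) at the last step j at which v is active, every neighbour u of v has been
  initialised, i.e. lies in some X_i with i <= j.\<close>
definition measurement_schedule :: "'a set \<Rightarrow> 'a set set \<Rightarrow> nat \<Rightarrow> (nat \<Rightarrow> 'a set) \<Rightarrow> bool" where
  "measurement_schedule V E n X \<longleftrightarrow>
     (\<forall>v\<in>V. \<exists>i\<in>{1..n}. v \<in> X i) \<and>
     (\<forall>v\<in>V. \<forall>i j k. 1 \<le> i \<and> i \<le> j \<and> j \<le> k \<and> k \<le> n \<and> v \<in> X i \<and> v \<in> X k \<longrightarrow> v \<in> X j) \<and>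
     (\<forall>v\<in>V. \<forall>j\<in>{1..n}. v \<in> X j \<and> (\<forall>k\<in>{j<..n}. v \<notin> X k) \<longrightarrow>
        (\<forall>u. {u, v} \<in> E \<longrightarrow> (\<exists>i\<in>{1..j}. u \<in> X i)))"

text \<open>Path decomposition (X_i), i = 1..n, of G = (V,E): (P1), (P2), (P3).\<close>
definition path_decomposition :: "'a set \<Rightarrow> 'a set set \<Rightarrow> nat \<Rightarrow> (nat \<Rightarrow> 'a set) \<Rightarrow> bool" where
  "path_decomposition V E n X \<longleftrightarrow>
     (\<forall>v\<in>V. \<exists>i\<in>{1..n}. v \<in> X i) \<and>
     (\<forall>e\<in>E. \<exists>i\<in>{1..n}. e \<subseteq> X i) \<and>
     (\<forall>i j k v. 1 \<le> i \<and> i \<le> j \<and> j \<le> k \<and> k \<le> n \<and> v \<in> X i \<and> v \<in> X k \<longrightarrow> v \<in> X j)"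

end

theory Submission
  imports Defs
begin

text \<open>The contiguity conditions (M1) and (P3) coincide since every active qubit is a vertex;
  the content lies in (M2) \<open>\<Longleftrightarrow>\<close> (P2). For an edge \<open>{u, v}\<close> whose endpoint \<open>v\<close> is measured
  first, at step \<open>j\<close>, (M2) says \<open>u\<close> was initialised by step \<open>j\<close>; as \<open>u\<close> is still active at its
  own later last step, contiguity makes it active at step \<open>j\<close>, together with \<open>v\<close>.
  Conversely, a bag containing both endpoints comes no later than the last step of \<open>v\<close>,
  so \<open>u\<close> was initialised in time.\<close>

lemma last_active_step_exists:
  fixes n :: nat
  assumes "\<exists>i\<in>{1..n}. v \<in> X i"
  shows "\<exists>j\<in>{1..n}. v \<in> X j \<and> (\<forall>k\<in>{j<..n}. v \<notin> X k)"
proof -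
  let ?active = "\<lambda>k. k \<in> {1..n} \<and> v \<in> X k"
  obtain i where "?active i" using assms by blast
  moreover have "\<forall>k. ?active k \<longrightarrow> k \<le> n" by simp
  ultimately obtain j where "?active j" and greatest: "\<forall>k. ?active k \<longrightarrow> k \<le> j"
    using Nat.ex_has_greatest_nat[of ?active i n] by blast
  moreover have "v \<notin> X k" if "k \<in> {j<..n}" for k
    using that greatest \<open>?active j\<close>
    by (metis atLeastAtMost_iff greaterThanAtMost_iff le_trans less_imp_le not_le)
  ultimately show ?thesis by blast
qed

lemma measurement_schedule_edge_active_when_measured:
  assumes M: "measurement_schedule V E n X"
    and "u \<in> V" "v \<in> V" and edge: "{u, v} \<in> E"
    and v_last: "j \<in> {1..n}" "v \<in> X j" "\<forall>k\<in>{j<..n}. v \<notin> X k"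
    and u_later: "j \<le> k" "k \<le> n" "u \<in> X k"
  shows "{u, v} \<subseteq> X j"
proof -
  obtain i where "i \<in> {1..j}" "u \<in> X i"
    using M \<open>v \<in> V\<close> v_last edge unfolding measurement_schedule_def by blast
  with M \<open>u \<in> V\<close> u_later v_last have "u \<in> X j"
    unfolding measurement_schedule_def by (meson atLeastAtMost_iff)
  with \<open>v \<in> X j\<close> show ?thesis by blast
qed

lemma measurement_schedule_covers_edge:
  assumes M: "measurement_schedule V E n X"
    and "u \<in> V" "v \<in> V" and edge: "{u, v} \<in> E"
  shows "\<exists>i\<in>{1..n}. {u, v} \<subseteq> X i"
proof -
  have active: "\<exists>i\<in>{1..n}. w \<in> X i" if "w \<in> V" for w
    using M that unfolding measurement_schedule_def by blast
  obtain ju where u_last: "ju \<in> {1..n}" "u \<in> X ju" "\<forall>k\<in>{ju<..n}. u \<notin> X k"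
    using last_active_step_exists[OF active[OF \<open>u \<in> V\<close>]] by blast
  obtain jv where v_last: "jv \<in> {1..n}" "v \<in> X jv" "\<forall>k\<in>{jv<..n}. v \<notin> X k"
    using last_active_step_exists[OF active[OF \<open>v \<in> V\<close>]] by blast
  show ?thesis
  proof (cases "jv \<le> ju")
    case True
    then have "{u, v} \<subseteq> X jv"
      using measurement_schedule_edge_active_when_measured[OF M \<open>u \<in> V\<close> \<open>v \<in> V\<close> edge v_last, where k = ju] u_last
      by auto
    with \<open>jv \<in> {1..n}\<close> show ?thesis by blast
  next
    case False
    have "{v, u} \<in> E" using edge by (simp add: insert_commute)
    with False have "{v, u} \<subseteq> X ju"
      using measurement_schedule_edge_active_when_measured[OF M \<open>v \<in> V\<close> \<open>u \<in> V\<close> _ u_last, where k = jv] v_last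
      by auto
    with \<open>ju \<in> {1..n}\<close> show ?thesis by blast
  qed
qed

lemma path_decomposition_neighbour_initialised:
  assumes P: "path_decomposition V E n X"
    and edge: "{u, v} \<in> E"
    and v_last: "v \<in> X j" "\<forall>k\<in>{j<..n}. v \<notin> X k"
  shows "\<exists>i\<in>{1..j}. u \<in> X i"
proof -
  obtain i where i: "i \<in> {1..n}" "{u, v} \<subseteq> X i"
    using P edge unfolding path_decomposition_def by blast
  then have "i \<le> j"
    using v_last by (meson atLeastAtMost_iff greaterThanAtMost_iff insert_subset not_le)
  with i show ?thesis by auto
qed

theorem theorem1:
  fixes V :: "'a set" and E :: "'a set set" and n :: nat and X :: "nat \<Rightarrow> 'a set"
  assumes "simple_graph V E"
    and "\<forall>i\<in>{1..n}. X i \<subseteq> V"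
  shows "measurement_schedule V E n X \<longleftrightarrow> path_decomposition V E n X"
proof
  assume M: "measurement_schedule V E n X"
  have all_active: "\<forall>v\<in>V. \<exists>i\<in>{1..n}. v \<in> X i"
    and contiguous: "\<forall>v\<in>V. \<forall>i j k. 1 \<le> i \<and> i \<le> j \<and> j \<le> k \<and> k \<le> n \<and> v \<in> X i \<and> v \<in> X k \<longrightarrow> v \<in> X j"
    using M unfolding measurement_schedule_def by blast+
  have "\<forall>e\<in>E. \<exists>i\<in>{1..n}. e \<subseteq> X i"
  proof
    fix e assume "e \<in> E"
    then obtain u v where "e = {u, v}" "u \<in> V" "v \<in> V"
      using assms(1) unfolding simple_graph_def by (metis card_2_iff insert_subset)
    with \<open>e \<in> E\<close> show "\<exists>i\<in>{1..n}. e \<subseteq> X i"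
      using measurement_schedule_covers_edge[OF M] by blast
  qed
  moreover have "\<forall>i j k v. 1 \<le> i \<and> i \<le> j \<and> j \<le> k \<and> k \<le> n \<and> v \<in> X i \<and> v \<in> X k \<longrightarrow> v \<in> X j"
    using contiguous assms(2) by (meson atLeastAtMost_iff order.trans subsetD)
  ultimately show "path_decomposition V E n X"
    using all_active unfolding path_decomposition_def by blast
next
  assume P: "path_decomposition V E n X"
  then have "\<forall>v\<in>V. \<exists>i\<in>{1..n}. v \<in> X i"
    and "\<forall>v\<in>V. \<forall>i j k. 1 \<le> i \<and> i \<le> j \<and> j \<le> k \<and> k \<le> n \<and> v \<in> X i \<and> v \<in> X k \<longrightarrow> v \<in> X j"
    unfolding path_decomposition_def by blast+
  moreover have "\<forall>v\<in>V. \<forall>j\<in>{1..n}. v \<in> X j \<and> (\<forall>k\<in>{j<..n}. v \<notin> X k) \<longrightarrow>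
      (\<forall>u. {u, v} \<in> E \<longrightarrow> (\<exists>i\<in>{1..j}. u \<in> X i))"
    using path_decomposition_neighbour_initialised[OF P] by blast
  ultimately show "measurement_schedule V E n X"
    unfolding measurement_schedule_def by blast
qed

end
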